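(* For every field $\mathbb{K}$, $\mathcal{G}+\mathcal{G}=\mathbb{K}((t^{-1}))$.
   Context: $\mathbb{K}((t^{-1}))$ is the field of formal Laurent series $\sum_{n=-\infty}^{\infty}\alpha_n t^{-n}$ over the field $\mathbb{K}$ (only finitely many nonzero $\alpha_n$ with $n<0$), with $\deg\alpha=\sup\{-n:\alpha_n\ne0\}$. Every $\alpha$ has a unique continued fraction expansion $[a_0;a_1,a_2,\dots]$ with $a_n\in\mathbb{K}[t]$, $\deg a_n\ge1$ for $n\ge1$, finite iff $\alpha\in\mathbb{K}(t)$. $a_n(\alpha)$ is the $n$-th partial quotient and $d_n(\alpha)=\deg a_n(\alpha)$. $\mathcal{G}=\{\alpha\in\mathbb{K}((t^{-1})):d_n(\alpha)\to\infty\}\cup\mathbb{K}(t)$. *)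

theory Defs
  imports "HOL-Computational_Algebra.Formal_Laurent_Series"
begin

text \<open>We model K((t^{-1})) as the type 'a fls of formal Laurent series in X,
where X plays the role of t^{-1}: the series sum of a_n t^{-n} is the fls with
coefficient a_n at index n (finitely many nonzero with n < 0).\<close>

definition tdeg :: "'a::field fls \<Rightarrow> int" where
  "tdeg \<alpha> = - fls_subdegree \<alpha>"

definition tpoly :: "'a::field poly \<Rightarrow> 'a fls" where
  "tpoly p = poly (map_poly fls_const p) fls_X_inv"

definition ratfuns :: "'a::field fls set" where
  "ratfuns = {tpoly p / tpoly q | p q. q \<noteq> 0}"

definition frac_part :: "'a::field fls \<Rightarrow> 'a fls" where
  "frac_part \<alpha> = fps_to_fls (fls_regpart \<alpha>) - fls_const (fls_nth \<alpha> 0)"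

definition poly_part :: "'a::field fls \<Rightarrow> 'a fls" where
  "poly_part \<alpha> = \<alpha> - frac_part \<alpha>"

fun cq :: "'a::field fls \<Rightarrow> nat \<Rightarrow> 'a fls" where
  "cq \<alpha> 0 = \<alpha>"
| "cq \<alpha> (Suc n) = inverse (frac_part (cq \<alpha> n))"

text \<open>Partial quotients a_n(alpha) and their degrees d_n(alpha)
 (meaningful for all n when the expansion is infinite).\<close>
definition pq :: "'a::field fls \<Rightarrow> nat \<Rightarrow> 'a fls" where
  "pq \<alpha> n = poly_part (cq \<alpha> n)"

definition pqdeg :: "'a::field fls \<Rightarrow> nat \<Rightarrow> int" where
  "pqdeg \<alpha> n = tdeg (pq \<alpha> n)"

definition Gset :: "'a::field fls set" where
  "Gset = {\<alpha>. filterlim (\<lambda>n. pqdeg \<alpha> n) at_top sequentially} \<union> ratfuns"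

end

theory Submission
  imports Defs
begin

unbundle fps_syntax

text \<open>
  A rational function a is a + 0. Otherwise let z_0 = a and z_(k+1) = a - c_k, where c_k is
  the (k div 2)-th convergent of z_k (z_k is \<open>split_seq a k\<close>). Then
  z_(k+2) - c_k = z_(k+1) - c_(k+1) is so small that z_(k+2) keeps the partial quotients
  of z_k up to index k div 2, while its next partial quotient has degree at least the
  margin by which this error beats |q|^(-2), q the denominator of c_k. The margins grow by
  at least 2 per step. Hence the even and the odd subsequence converge coefficientwise to
  series \<beta> and \<gamma> whose (i+1)-st partial quotients have degree at least i, and
  \<beta> + \<gamma> = lim (z_(2j) + z_(2j+1)) = a + lim (z_(2j) - c_(2j)) = a.
\<close>

lemma frac_part_nth: "frac_part x $$ i = (if 1 \<le> i then x $$ i else 0)"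
  unfolding frac_part_def by auto

lemma poly_part_nth: "poly_part x $$ i = (if i \<le> 0 then x $$ i else 0)"
  unfolding poly_part_def by (simp add: frac_part_nth)

lemma poly_part_plus_frac_part: "poly_part x + frac_part x = x"
  unfolding poly_part_def by simp

lemma subdegree_frac_part_pos:
  assumes "frac_part x \<noteq> 0" shows "0 < fls_subdegree (frac_part x)"
  using fls_subdegree_geI[OF assms, of 1] by (simp add: frac_part_nth)

lemma subdegree_frac_part_nonneg: "0 \<le> fls_subdegree (frac_part x)"
  by (cases "frac_part x = 0") (auto dest: subdegree_frac_part_pos)

section \<open>Rational functions\<close>

lemma tpoly_pCons: "tpoly (pCons c p) = fls_const c + fls_X_inv * tpoly p"
  by (simp add: tpoly_def map_poly_pCons)

lemma tpoly_0 [simp]: "tpoly 0 = 0"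
  by (simp add: tpoly_def)

lemma tpoly_nth: "tpoly p $$ k = (if k \<le> 0 then coeff p (nat (- k)) else 0)"
proof (induction p arbitrary: k rule: pCons_induct)
  case (pCons c p)
  have "tpoly (pCons c p) $$ k = (if k = 0 then c else 0) + tpoly p $$ (k + 1)"
    by (simp add: tpoly_pCons fls_X_inv_times_conv_shift)
  also have "\<dots> = (if k \<le> 0 then coeff (pCons c p) (nat (- k)) else 0)"
    using pCons.IH[of "k + 1"] by (auto simp: coeff_pCons nat_diff_distrib split: nat.split)
  finally show ?case .
qed simp

lemma tpoly_add: "tpoly (p + q) = tpoly p + tpoly q"
  by (rule fls_eqI) (simp add: tpoly_nth)

lemma tpoly_smult: "tpoly (smult c p) = fls_const c * tpoly p"
  by (rule fls_eqI) (simp add: tpoly_nth)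

lemma tpoly_mult: "tpoly (p * q) = tpoly p * tpoly q"
proof (induction p rule: pCons_induct)
  case (pCons c p)
  have "tpoly (pCons c p * q) = tpoly (smult c q) + tpoly (pCons 0 (p * q))"
    by (simp add: tpoly_add)
  also have "\<dots> = tpoly (pCons c p) * tpoly q"
    by (simp add: tpoly_smult tpoly_pCons pCons.IH algebra_simps)
  finally show ?case .
qed simp

lemma tpoly_eq_0_iff [simp]: "tpoly p = 0 \<longleftrightarrow> p = 0"
proof
  assume "tpoly p = 0"
  then have "tpoly p $$ (- int n) = 0" for n by simp
  then show "p = 0" by (intro poly_eqI) (simp add: tpoly_nth)
qed simp

lemma ratfunsE:
  assumes "x \<in> ratfuns"
  obtains p q where "q \<noteq> 0" "x = tpoly p / tpoly q"
  using assms unfolding ratfuns_def by blast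

lemma ratfunsI: "q \<noteq> 0 \<Longrightarrow> tpoly p / tpoly q \<in> ratfuns"
  unfolding ratfuns_def by blast

lemma zero_in_ratfuns: "0 \<in> ratfuns"
  using ratfunsI[of 1 0] by (simp add: tpoly_def)

lemma ratfuns_add: "x \<in> ratfuns \<Longrightarrow> y \<in> ratfuns \<Longrightarrow> x + y \<in> ratfuns"
proof (elim ratfunsE)
  fix p q p' q' assume "q \<noteq> 0" "x = tpoly p / tpoly q" "q' \<noteq> 0" "y = tpoly p' / tpoly q'"
  then have "x + y = tpoly (p * q' + p' * q) / tpoly (q * q')"
    by (simp add: tpoly_add tpoly_mult field_simps)
  with \<open>q \<noteq> 0\<close> \<open>q' \<noteq> 0\<close> show "x + y \<in> ratfuns"
    by (simp add: ratfunsI)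
qed

lemma ratfuns_inverse: "x \<in> ratfuns \<Longrightarrow> inverse x \<in> ratfuns"
proof (elim ratfunsE)
  fix p q assume "q \<noteq> 0" "x = tpoly p / tpoly q"
  then show "inverse x \<in> ratfuns"
    using zero_in_ratfuns ratfunsI[of p q] by (cases "p = 0") auto
qed

lemma poly_part_in_ratfuns: "poly_part z \<in> ratfuns"
proof -
  define p where "p = Poly (map (\<lambda>n. z $$ (- int n)) [0..<nat (- fls_subdegree z) + 1])"
  have "tpoly p $$ k = poly_part z $$ k" for k
    by (cases "k < fls_subdegree z")
      (auto simp: tpoly_nth poly_part_nth p_def nth_default_def simp del: upt_Suc)
  then have "tpoly p = poly_part z"
    by (rule fls_eqI)
  then show ?thesis
    using ratfunsI[of 1 p] by (simp add: tpoly_def)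
qed

section \<open>Agreement of coefficients\<close>

text \<open>For the absolute value |x| = |t|^(deg x), \<open>agree_upto N x y\<close> means |x - y| < |t|^(-N).\<close>

definition agree_upto :: "int \<Rightarrow> 'a::zero fls \<Rightarrow> 'a fls \<Rightarrow> bool" where
  "agree_upto N x y \<longleftrightarrow> (\<forall>i\<le>N. x $$ i = y $$ i)"

lemma agree_upto_refl [simp]: "agree_upto N x x"
  unfolding agree_upto_def by simp

lemma agree_upto_sym: "agree_upto N x y \<Longrightarrow> agree_upto N y x"
  unfolding agree_upto_def by simp

lemma agree_upto_trans: "agree_upto N x y \<Longrightarrow> agree_upto N y z \<Longrightarrow> agree_upto N x z"
  unfolding agree_upto_def by simp

lemma agree_upto_mono: "agree_upto N x y \<Longrightarrow> M \<le> N \<Longrightarrow> agree_upto M x y"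
  unfolding agree_upto_def by simp

lemma agree_upto_add:
  "agree_upto N x x' \<Longrightarrow> agree_upto N y y' \<Longrightarrow> agree_upto N (x + y) (x' + y')"
  unfolding agree_upto_def by simp

lemma agree_upto_diff:
  "agree_upto N x x' \<Longrightarrow> agree_upto N y y' \<Longrightarrow> agree_upto N (x - y) (x' - y')"
  unfolding agree_upto_def by simp

lemma eq_if_agree_upto_all:
  assumes "\<And>j. agree_upto (int j - 1) x y" shows "x = y"
proof (rule fls_eqI)
  fix i
  show "x $$ i = y $$ i"
    using assms[of "nat (i + 1)"] unfolding agree_upto_def by simp
qed

lemma agree_upto_limit:
  fixes g :: "nat \<Rightarrow> 'a::zero fls"
  assumes step: "\<And>j. agree_upto (int j - 1) (g (Suc j)) (g j)"
  obtains y where "\<And>j. agree_upto (int j - 1) y (g j)"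
proof
  have stable: "agree_upto (int j - 1) (g (j + m)) (g j)" for j m
  proof (induction m)
    case (Suc m)
    have "agree_upto (int j - 1) (g (Suc (j + m))) (g (j + m))"
      using agree_upto_mono[OF step] by simp
    with Suc.IH show ?case by (auto intro: agree_upto_trans)
  qed simp
  define y where "y = Abs_fls (\<lambda>i. g (nat (i + 1)) $$ i)"
  have y_nth: "y $$ i = g (nat (i + 1)) $$ i" for i
    unfolding y_def by (rule nth_Abs_fls_lower_bound[of "min 0 (fls_subdegree (g 0))"]) auto
  show "agree_upto (int j - 1) y (g j)" for j
    unfolding agree_upto_def
  proof (intro allI impI)
    fix i assume "i \<le> int j - 1"
    then have "j = nat (i + 1) + (j - nat (i + 1))" "i \<le> int (nat (i + 1)) - 1" by auto
    then show "y $$ i = g j $$ i"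
      using stable[of "nat (i + 1)" "j - nat (i + 1)"] by (simp add: y_nth agree_upto_def)
  qed
qed

lemma agree_upto_subdegree:
  assumes "u \<noteq> 0" "fls_subdegree u \<le> N" "agree_upto N u v"
  shows "v \<noteq> 0" "fls_subdegree v = fls_subdegree u"
proof -
  have "v $$ fls_subdegree u \<noteq> 0"
    using assms unfolding agree_upto_def by (metis nth_fls_subdegree_nonzero)
  moreover have "v $$ k = 0" if "k < fls_subdegree u" for k
  proof -
    have "k \<le> N" using that assms(2) by simp
    then show ?thesis using assms(3) that unfolding agree_upto_def by auto
  qed
  ultimately show "v \<noteq> 0" "fls_subdegree v = fls_subdegree u"
    by (auto intro: fls_subdegree_eqI)
qed

lemma agree_upto_inverse:
  fixes u v :: "'a::field fls"
  assumes "u \<noteq> 0" "fls_subdegree u \<le> N" "agree_upto N u v"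
  shows "agree_upto (N - 2 * fls_subdegree u) (inverse u) (inverse v)"
proof (cases "u = v")
  case False
  have v: "v \<noteq> 0" "fls_subdegree v = fls_subdegree u"
    using agree_upto_subdegree[OF assms] by auto
  have "v - u \<noteq> 0" using False by simp
  moreover have "(v - u) $$ k = 0" if "k < N + 1" for k
    using assms(3) that unfolding agree_upto_def by simp
  ultimately have "N + 1 \<le> fls_subdegree (v - u)"
    by (rule fls_subdegree_geI)
  moreover have "inverse u - inverse v = (v - u) * (inverse u * inverse v)"
    using assms(1) v(1) by (simp add: field_simps)
  ultimately have "N - 2 * fls_subdegree u < fls_subdegree (inverse u - inverse v)"
    using \<open>v - u \<noteq> 0\<close> assms(1) v by simp
  then have "(inverse u - inverse v) $$ i = 0" if "i \<le> N - 2 * fls_subdegree u" for i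
    using that by (intro fls_eq0_below_subdegree) simp
  then show ?thesis
    unfolding agree_upto_def by simp
qed simp

section \<open>Continued fractions\<close>

definition gauss_map :: "'a::field fls \<Rightarrow> 'a fls" where
  "gauss_map x = inverse (frac_part x)"

lemma cq_Suc_gauss_map: "cq z (Suc n) = cq (gauss_map z) n"
  by (induction n) (simp_all add: gauss_map_def)

lemma pqdeg_Suc: "pqdeg z (Suc j) = fls_subdegree (frac_part (cq z j))"
proof (cases "frac_part (cq z j) = 0")
  case True
  then show ?thesis by (simp add: pqdeg_def pq_def tdeg_def poly_part_def frac_part_def)
next
  case False
  define f where "f = frac_part (cq z j)"
  have "0 < fls_subdegree f"
    using False by (simp add: f_def subdegree_frac_part_pos)
  have "fls_subdegree (poly_part (inverse f)) = - fls_subdegree f"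
  proof (rule fls_subdegree_eqI)
    show "poly_part (inverse f) $$ (- fls_subdegree f) \<noteq> 0"
      using nth_fls_subdegree_nonzero[of "inverse f"] False \<open>0 < fls_subdegree f\<close>
      by (simp add: poly_part_nth f_def)
    show "poly_part (inverse f) $$ k = 0" if "k < - fls_subdegree f" for k
      using that by (simp add: poly_part_nth)
  qed
  then show ?thesis
    by (simp add: pqdeg_def pq_def tdeg_def f_def)
qed

lemma pqdeg_Suc_nonneg: "0 \<le> pqdeg z (Suc j)"
  by (simp add: pqdeg_Suc subdegree_frac_part_nonneg)

lemma pqdeg_Suc_pos_iff: "0 < pqdeg z (Suc j) \<longleftrightarrow> frac_part (cq z j) \<noteq> 0"
  by (auto simp: pqdeg_Suc subdegree_frac_part_pos)

lemma pqdeg_gauss_map: "pqdeg (gauss_map z) j = pqdeg z (Suc j)"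
  by (simp only: pqdeg_def pq_def cq_Suc_gauss_map)

text \<open>The degree of the denominator of the \<open>n\<close>-th convergent.\<close>

definition denom_deg :: "'a::field fls \<Rightarrow> nat \<Rightarrow> int" where
  "denom_deg z n = (\<Sum>j<n. pqdeg z (Suc j))"

lemma denom_deg_0 [simp]: "denom_deg z 0 = 0"
  by (simp add: denom_deg_def)

lemma denom_deg_Suc: "denom_deg z (Suc n) = denom_deg z n + pqdeg z (Suc n)"
  by (simp add: denom_deg_def)

lemma denom_deg_Suc_gauss_map: "denom_deg z (Suc n) = pqdeg z 1 + denom_deg (gauss_map z) n"
  unfolding denom_deg_def sum.lessThan_Suc_shift by (simp add: pqdeg_gauss_map)

lemma denom_deg_nonneg: "0 \<le> denom_deg z n"
  by (simp add: denom_deg_def sum_nonneg pqdeg_Suc_nonneg)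

lemma denom_deg_mono: "m \<le> n \<Longrightarrow> denom_deg z m \<le> denom_deg z n"
proof (induction n)
  case (Suc n)
  then show ?case
    using pqdeg_Suc_nonneg[of z n] by (auto simp: denom_deg_Suc le_Suc_eq)
qed simp

lemma denom_deg_cong:
  "(\<And>j. j < n \<Longrightarrow> pqdeg y (Suc j) = pqdeg z (Suc j)) \<Longrightarrow> denom_deg y n = denom_deg z n"
  unfolding denom_deg_def by (rule sum.cong) simp_all

lemma subdegree_frac_part_ge_if_agree_upto_poly_part:
  assumes "agree_upto (M - 1) (poly_part x) w" "frac_part w \<noteq> 0"
  shows "M \<le> fls_subdegree (frac_part w)"
proof (rule fls_subdegree_geI[OF assms(2)])
  fix i assume "i < M"
  then have "poly_part x $$ i = w $$ i"
    using assms(1) by (simp add: agree_upto_def)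
  then show "frac_part w $$ i = 0"
    by (auto simp: frac_part_nth poly_part_nth)
qed

definition infinite_cf :: "'a::field fls \<Rightarrow> bool" where
  "infinite_cf z \<longleftrightarrow> (\<forall>j. frac_part (cq z j) \<noteq> 0)"

lemma infinite_cf_pqdeg_pos: "infinite_cf z \<Longrightarrow> 0 < pqdeg z (Suc j)"
  by (simp add: infinite_cf_def pqdeg_Suc_pos_iff)

lemma infinite_cf_gauss_map: "infinite_cf z \<Longrightarrow> infinite_cf (gauss_map z)"
  unfolding infinite_cf_def by (metis cq_Suc_gauss_map)

lemma gauss_map_nonzero: "infinite_cf z \<Longrightarrow> gauss_map z \<noteq> 0"
  unfolding infinite_cf_def gauss_map_def by (metis cq.simps(1) inverse_zero_imp_zero)

lemma subdegree_gauss_map: "fls_subdegree (gauss_map z) = - pqdeg z 1"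
  using pqdeg_Suc[of z 0] by (simp add: gauss_map_def)

lemma subdegree_gauss_map_neg: "infinite_cf z \<Longrightarrow> fls_subdegree (gauss_map z) < 0"
  by (simp add: subdegree_gauss_map infinite_cf_pqdeg_pos)

lemma agree_upto_gauss_map:
  fixes x y :: "'a::field fls"
  assumes "frac_part x \<noteq> 0" "fls_subdegree (frac_part x) \<le> N" "agree_upto N x y"
  shows "fls_subdegree (frac_part y) = fls_subdegree (frac_part x)"
    and "agree_upto (N - 2 * fls_subdegree (frac_part x)) (gauss_map x) (gauss_map y)"
proof -
  have "agree_upto N (frac_part x) (frac_part y)"
    using assms(3) by (simp add: agree_upto_def frac_part_nth)
  from agree_upto_subdegree[OF assms(1,2) this] agree_upto_inverse[OF assms(1,2) this]
  show "fls_subdegree (frac_part y) = fls_subdegree (frac_part x)"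
    and "agree_upto (N - 2 * fls_subdegree (frac_part x)) (gauss_map x) (gauss_map y)"
    by (simp_all add: gauss_map_def)
qed

lemma agree_upto_cq:
  fixes z y :: "'a::field fls"
  assumes "agree_upto N z y" "\<forall>j<n. frac_part (cq z j) \<noteq> 0" "2 * denom_deg z n \<le> N + 1"
  shows "(\<forall>j<n. pqdeg y (Suc j) = pqdeg z (Suc j))
    \<and> agree_upto (N - 2 * denom_deg z n) (cq z n) (cq y n)"
  using assms(2,3)
proof (induction n)
  case 0
  then show ?case using assms(1) by simp
next
  case (Suc n)
  let ?s = "pqdeg z (Suc n)"
  have nz: "frac_part (cq z n) \<noteq> 0"
    using Suc.prems(1) by simp
  then have "0 < ?s"
    by (simp add: pqdeg_Suc_pos_iff)
  moreover have "2 * denom_deg z n \<le> N + 1"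
    using Suc.prems(2) denom_deg_mono[of n "Suc n" z] by simp
  ultimately have IH: "\<forall>j<n. pqdeg y (Suc j) = pqdeg z (Suc j)"
    "agree_upto (N - 2 * denom_deg z n) (cq z n) (cq y n)"
    using Suc.IH Suc.prems(1) by auto
  have "fls_subdegree (frac_part (cq z n)) \<le> N - 2 * denom_deg z n"
    using Suc.prems(2) \<open>0 < ?s\<close> by (simp add: denom_deg_Suc pqdeg_Suc)
  note step = agree_upto_gauss_map[OF nz this IH(2)]
  have "pqdeg y (Suc n) = ?s"
    using step(1) by (simp add: pqdeg_Suc)
  moreover have "agree_upto (N - 2 * denom_deg z (Suc n)) (cq z (Suc n)) (cq y (Suc n))"
    using step(2) by (simp add: pqdeg_Suc denom_deg_Suc gauss_map_def algebra_simps)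
  ultimately show ?case
    using IH(1) by (auto simp: less_Suc_eq)
qed

fun convergent :: "'a::field fls \<Rightarrow> nat \<Rightarrow> 'a fls" where
  "convergent z 0 = poly_part z"
| "convergent z (Suc n) = poly_part z + inverse (convergent (gauss_map z) n)"

text \<open>The classical |z - p_n/q_n| = 1 / |q_n q_(n+1)|, as an upper bound.\<close>

lemma agree_upto_convergent:
  "infinite_cf z \<Longrightarrow> agree_upto (2 * denom_deg z n + pqdeg z (Suc n) - 1) z (convergent z n)"
proof (induction n arbitrary: z)
  case 0
  have "z $$ i = poly_part z $$ i" if "i \<le> pqdeg z 1 - 1" for i
  proof (cases "i \<le> 0")
    case False
    have "frac_part z $$ i = 0"
      using that pqdeg_Suc[of z 0] by (intro fls_eq0_below_subdegree) simp
    then show ?thesis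
      using False by (simp add: poly_part_nth frac_part_nth)
  qed (simp add: poly_part_nth)
  then show ?case
    by (simp add: agree_upto_def)
next
  case (Suc n)
  let ?w = "gauss_map z"
  let ?M = "2 * denom_deg ?w n + pqdeg ?w (Suc n) - 1"
  have "agree_upto ?M ?w (convergent ?w n)"
    using Suc.IH[OF infinite_cf_gauss_map[OF Suc.prems]] .
  moreover have "fls_subdegree ?w \<le> ?M"
    using denom_deg_nonneg[of ?w n] pqdeg_Suc_nonneg[of ?w n] subdegree_gauss_map_neg[OF Suc.prems]
    by simp
  ultimately have "agree_upto (?M + 2 * pqdeg z 1) (inverse ?w) (inverse (convergent ?w n))"
    using agree_upto_inverse[OF gauss_map_nonzero[OF Suc.prems]] by (simp add: subdegree_gauss_map)
  then have "agree_upto (?M + 2 * pqdeg z 1) (poly_part z + frac_part z) (convergent z (Suc n))"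
    by (simp add: agree_upto_add gauss_map_def)
  then have "agree_upto (?M + 2 * pqdeg z 1) z (convergent z (Suc n))"
    by (simp only: poly_part_plus_frac_part)
  then show ?case
    by (simp add: denom_deg_Suc_gauss_map pqdeg_gauss_map algebra_simps)
qed

lemma subdegree_convergent_gauss_map:
  assumes "infinite_cf z"
  shows "convergent (gauss_map z) n \<noteq> 0"
    and "fls_subdegree (convergent (gauss_map z) n) = - pqdeg z 1"
proof -
  let ?w = "gauss_map z"
  have "fls_subdegree ?w \<le> 2 * denom_deg ?w n + pqdeg ?w (Suc n) - 1"
    using denom_deg_nonneg[of ?w n] pqdeg_Suc_nonneg[of ?w n] subdegree_gauss_map_neg[OF assms]
    by simp
  from agree_upto_subdegree[OF gauss_map_nonzero[OF assms] this
      agree_upto_convergent[OF infinite_cf_gauss_map[OF assms]]]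
  show "convergent ?w n \<noteq> 0" "fls_subdegree (convergent ?w n) = - pqdeg z 1"
    by (simp_all add: subdegree_gauss_map)
qed

lemma gauss_map_convergent_Suc:
  assumes "infinite_cf z"
  shows "gauss_map (convergent z (Suc n)) = convergent (gauss_map z) n"
proof -
  let ?c = "convergent (gauss_map z) n"
  have "fls_subdegree (inverse ?c) = pqdeg z 1"
    using subdegree_convergent_gauss_map[OF assms] by simp
  then have "inverse ?c $$ i = 0" if "i < 1" for i
    using that infinite_cf_pqdeg_pos[OF assms, of 0] by (intro fls_eq0_below_subdegree) simp
  then have "frac_part (poly_part z + inverse ?c) = inverse ?c"
    by (intro fls_eqI) (simp add: frac_part_nth poly_part_nth)
  then show ?thesis
    by (simp add: gauss_map_def)
qed

lemma cq_convergent: "infinite_cf z \<Longrightarrow> cq (convergent z n) n = poly_part (cq z n)"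
proof (induction n arbitrary: z)
  case (Suc n)
  have "cq (convergent z (Suc n)) (Suc n) = cq (convergent (gauss_map z) n) n"
    by (simp only: cq_Suc_gauss_map gauss_map_convergent_Suc[OF Suc.prems])
  also have "\<dots> = poly_part (cq z (Suc n))"
    by (simp only: Suc.IH[OF infinite_cf_gauss_map[OF Suc.prems]] cq_Suc_gauss_map)
  finally show ?case .
qed simp

lemma convergent_eq_self: "frac_part (cq z n) = 0 \<Longrightarrow> convergent z n = z"
proof (induction n arbitrary: z)
  case 0
  then show ?case using poly_part_plus_frac_part[of z] by simp
next
  case (Suc n)
  then have "convergent (gauss_map z) n = gauss_map z"
    by (simp only: cq_Suc_gauss_map)
  then show ?case
    using poly_part_plus_frac_part[of z] by (simp add: gauss_map_def)
qed

lemma convergent_in_ratfuns: "convergent z n \<in> ratfuns"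
  by (induction n arbitrary: z) (simp_all add: ratfuns_add ratfuns_inverse poly_part_in_ratfuns)

lemma infinite_cf_if_not_ratfuns: "z \<notin> ratfuns \<Longrightarrow> infinite_cf z"
  unfolding infinite_cf_def using convergent_eq_self convergent_in_ratfuns by metis

lemma pqdeg_convergent:
  assumes "infinite_cf z" "j < n"
  shows "pqdeg (convergent z n) (Suc j) = pqdeg z (Suc j)"
proof -
  have "\<forall>j<n. frac_part (cq z j) \<noteq> 0"
    using assms(1) by (simp add: infinite_cf_def)
  moreover have "2 * denom_deg z n \<le> 2 * denom_deg z n + pqdeg z (Suc n) - 1 + 1"
    using pqdeg_Suc_nonneg[of z n] by simp
  ultimately show ?thesis
    using agree_upto_cq[OF agree_upto_convergent[OF assms(1)]] assms(2) by auto
qed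

lemma in_Gset_if_pqdeg_ge:
  assumes "\<And>i. int i \<le> pqdeg y (Suc i)"
  shows "y \<in> Gset"
proof -
  have "filterlim (\<lambda>i. pqdeg y (Suc i)) at_top sequentially"
    by (rule filterlim_at_top_mono[OF filterlim_int_sequentially]) (simp add: assms)
  then show ?thesis
    unfolding Gset_def by (simp add: filterlim_sequentially_Suc)
qed

section \<open>The decomposition\<close>

fun split_seq :: "'a::field fls \<Rightarrow> nat \<Rightarrow> 'a fls" where
  "split_seq a 0 = a"
| "split_seq a (Suc k) = a - convergent (split_seq a k) (k div 2)"

declare split_seq.simps(2) [simp del]

text \<open>
  The precision to which \<open>split_seq a (k + 2)\<close> approximates the convergent of
  \<open>split_seq a k\<close> used in its construction, in excess of twice the degree of the
  convergent's denominator.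
\<close>

definition split_margin :: "'a::field fls \<Rightarrow> nat \<Rightarrow> int" where
  "split_margin a k =
     2 * denom_deg (split_seq a (Suc k)) (Suc k div 2) + pqdeg (split_seq a (Suc k)) (Suc (Suc k div 2))
     - 2 * denom_deg (split_seq a k) (k div 2)"

context
  fixes a :: "'a::field fls"
  assumes not_ratfun: "a \<notin> ratfuns"
begin

lemma infinite_cf_split_seq: "infinite_cf (split_seq a k)"
proof (cases k)
  case 0
  then show ?thesis using not_ratfun by (simp add: infinite_cf_if_not_ratfuns)
next
  case (Suc k')
  then have "a = split_seq a k + convergent (split_seq a k') (k' div 2)"
    by (simp add: split_seq.simps)
  then have "split_seq a k \<notin> ratfuns"
    using not_ratfun convergent_in_ratfuns ratfuns_add by metis
  then show ?thesis
    by (rule infinite_cf_if_not_ratfuns)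
qed

lemma agree_upto_split_seq_Suc_Suc:
  "agree_upto (split_margin a k + 2 * denom_deg (split_seq a k) (k div 2) - 1)
     (split_seq a (Suc (Suc k))) (convergent (split_seq a k) (k div 2))"
proof -
  let ?N = "split_margin a k + 2 * denom_deg (split_seq a k) (k div 2) - 1"
  have "agree_upto ?N (convergent (split_seq a (Suc k)) (Suc k div 2)) (split_seq a (Suc k))"
    using agree_upto_sym[OF agree_upto_convergent[OF infinite_cf_split_seq]]
    by (simp add: split_margin_def)
  then have "agree_upto ?N (a - convergent (split_seq a (Suc k)) (Suc k div 2)) (a - split_seq a (Suc k))"
    by (simp add: agree_upto_diff)
  then show ?thesis
    by (simp add: split_seq.simps)
qed

lemma pqdeg_split_seq_Suc_Suc:
  assumes "1 \<le> split_margin a k"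
  shows "\<forall>j<k div 2. pqdeg (split_seq a (Suc (Suc k))) (Suc j) = pqdeg (split_seq a k) (Suc j)"
    and "split_margin a k \<le> pqdeg (split_seq a (Suc (Suc k))) (Suc (k div 2))"
proof -
  define n where "n = k div 2"
  define z where "z = split_seq a k"
  define y where "y = split_seq a (Suc (Suc k))"
  define c where "c = convergent z n"
  define N where "N = split_margin a k + 2 * denom_deg z n - 1"
  have agree: "agree_upto N c y"
    unfolding N_def c_def y_def z_def n_def by (rule agree_upto_sym[OF agree_upto_split_seq_Suc_Suc])
  have same: "pqdeg c (Suc j) = pqdeg z (Suc j)" if "j < n" for j
    unfolding c_def z_def using pqdeg_convergent[OF infinite_cf_split_seq that] .
  then have "\<forall>j<n. frac_part (cq c j) \<noteq> 0"
    using infinite_cf_pqdeg_pos[OF infinite_cf_split_seq] by (simp add: z_def flip: pqdeg_Suc_pos_iff)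
  moreover have denom: "denom_deg c n = denom_deg z n"
    using same by (rule denom_deg_cong)
  then have "2 * denom_deg c n \<le> N + 1"
    using assms by (simp add: N_def)
  ultimately have cq_agree: "\<forall>j<n. pqdeg y (Suc j) = pqdeg c (Suc j)"
    "agree_upto (N - 2 * denom_deg c n) (cq c n) (cq y n)"
    using agree_upto_cq[OF agree] by auto
  show "\<forall>j<k div 2. pqdeg (split_seq a (Suc (Suc k))) (Suc j) = pqdeg (split_seq a k) (Suc j)"
    using cq_agree(1) same by (simp add: y_def z_def n_def)
  have "agree_upto (split_margin a k - 1) (poly_part (cq z n)) (cq y n)"
    using cq_agree(2) denom cq_convergent[OF infinite_cf_split_seq] by (simp add: N_def c_def z_def)
  moreover have "frac_part (cq y n) \<noteq> 0"
    using infinite_cf_split_seq unfolding infinite_cf_def y_def by blast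
  ultimately show "split_margin a k \<le> pqdeg (split_seq a (Suc (Suc k))) (Suc (k div 2))"
    unfolding pqdeg_Suc y_def n_def by (rule subdegree_frac_part_ge_if_agree_upto_poly_part)
qed

lemma split_margin_Suc:
  assumes "1 \<le> split_margin a k"
  shows "split_margin a k + 2 \<le> split_margin a (Suc k)"
proof -
  let ?z = "split_seq a" and ?n = "k div 2"
  have "denom_deg (?z (Suc (Suc k))) ?n = denom_deg (?z k) ?n"
    using pqdeg_split_seq_Suc_Suc(1)[OF assms] by (intro denom_deg_cong) auto
  then have "denom_deg (?z (Suc (Suc k))) (Suc (Suc k) div 2)
      = denom_deg (?z k) ?n + pqdeg (?z (Suc (Suc k))) (Suc ?n)"
    by (simp add: denom_deg_Suc)
  moreover have "split_margin a k \<le> pqdeg (?z (Suc (Suc k))) (Suc ?n)"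
    by (rule pqdeg_split_seq_Suc_Suc(2)[OF assms])
  moreover have "0 < pqdeg (?z (Suc k)) (Suc (Suc k div 2))"
    "0 < pqdeg (?z (Suc (Suc k))) (Suc (Suc (Suc k) div 2))"
    by (simp_all add: infinite_cf_pqdeg_pos infinite_cf_split_seq)
  ultimately show ?thesis
    unfolding split_margin_def by linarith
qed

lemma split_margin_ge: "2 * int k + 1 \<le> split_margin a k"
proof (induction k)
  case 0
  show ?case
    using infinite_cf_pqdeg_pos[OF infinite_cf_split_seq, of 1 0] by (simp add: split_margin_def)
next
  case (Suc k)
  then show ?case using split_margin_Suc[of k] by simp
qed

lemma pqdeg_split_seq_stable:
  "j < k div 2 \<Longrightarrow> pqdeg (split_seq a (k + 2 * m)) (Suc j) = pqdeg (split_seq a k) (Suc j)"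
proof (induction m)
  case (Suc m)
  have "1 \<le> split_margin a (k + 2 * m)"
    using split_margin_ge[of "k + 2 * m"] by simp
  from pqdeg_split_seq_Suc_Suc(1)[OF this] Suc show ?case
    by simp
qed simp

lemma split_seq_precision_ge:
  "int k \<le> 2 * denom_deg (split_seq a k) (k div 2) + pqdeg (split_seq a k) (Suc (k div 2))"
proof (cases k)
  case 0
  then show ?thesis using pqdeg_Suc_nonneg[of a 0] by simp
next
  case (Suc k')
  then show ?thesis
    using split_margin_ge[of k'] denom_deg_nonneg[of "split_seq a k'" "k' div 2"]
    by (simp add: split_margin_def)
qed

lemma agree_upto_split_seq: "agree_upto (int k - 1) (split_seq a (Suc (Suc k))) (split_seq a k)"
proof -
  let ?c = "convergent (split_seq a k) (k div 2)"
  have "agree_upto (int k - 1) (split_seq a (Suc (Suc k))) ?c"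
    by (rule agree_upto_mono[OF agree_upto_split_seq_Suc_Suc])
      (use split_margin_ge[of k] denom_deg_nonneg[of "split_seq a k" "k div 2"] in simp)
  moreover have "agree_upto (int k - 1) ?c (split_seq a k)"
    by (rule agree_upto_mono[OF agree_upto_sym[OF agree_upto_convergent[OF infinite_cf_split_seq]]])
      (use split_seq_precision_ge[of k] in simp)
  ultimately show ?thesis
    by (rule agree_upto_trans)
qed

lemma split_seq_limit:
  obtains y where "\<And>j. agree_upto (int j - 1) y (split_seq a (p + 2 * j))"
proof -
  have "agree_upto (int j - 1) (split_seq a (p + 2 * Suc j)) (split_seq a (p + 2 * j))" for j
    using agree_upto_mono[OF agree_upto_split_seq[of "p + 2 * j"], of "int j - 1"] by simp
  from agree_upto_limit[OF this] show thesis
    using that by blast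
qed

lemma pqdeg_ge_if_agree_upto_split_seq:
  assumes "p < 2" and agree: "\<And>j. agree_upto (int j - 1) y (split_seq a (p + 2 * j))"
  shows "int i \<le> pqdeg y (Suc i)"
proof -
  define K where "K = p + 2 * Suc i"
  define m where "m = nat (2 * denom_deg (split_seq a K) (Suc i))"
  define z where "z = split_seq a (K + 2 * m)"
  have "K div 2 = Suc i"
    using assms(1) by (simp add: K_def)
  then have stable: "pqdeg z (Suc j) = pqdeg (split_seq a K) (Suc j)" if "j < Suc i" for j
    using pqdeg_split_seq_stable that by (simp add: z_def)
  have "agree_upto (int (Suc i + m) - 1) z y"
    using agree_upto_sym[OF agree[of "Suc i + m"]] by (simp add: z_def K_def algebra_simps)
  moreover have "\<forall>j<Suc i. frac_part (cq z j) \<noteq> 0"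
    using infinite_cf_split_seq unfolding infinite_cf_def z_def by blast
  moreover have "2 * denom_deg z (Suc i) \<le> int (Suc i + m) - 1 + 1"
    using stable denom_deg_cong[of "Suc i" z "split_seq a K"] by (simp add: m_def)
  ultimately have "\<forall>j<Suc i. pqdeg y (Suc j) = pqdeg z (Suc j)"
    by (rule agree_upto_cq[THEN conjunct1])
  then have "pqdeg y (Suc i) = pqdeg (split_seq a K) (Suc i)"
    using stable by simp
  moreover have "split_margin a (p + 2 * i) \<le> pqdeg (split_seq a K) (Suc i)"
    using pqdeg_split_seq_Suc_Suc(2)[of "p + 2 * i"] split_margin_ge[of "p + 2 * i"] assms(1)
    by (simp add: K_def)
  ultimately show ?thesis
    using split_margin_ge[of "p + 2 * i"] by simp
qed

lemma Gset_decomposition: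
  obtains \<beta> \<gamma> where "\<beta> \<in> Gset" "\<gamma> \<in> Gset" "a = \<beta> + \<gamma>"
proof -
  obtain \<beta> where \<beta>: "\<And>j. agree_upto (int j - 1) \<beta> (split_seq a (0 + 2 * j))"
    by (rule split_seq_limit[of 0]) blast
  obtain \<gamma> where \<gamma>: "\<And>j. agree_upto (int j - 1) \<gamma> (split_seq a (1 + 2 * j))"
    by (rule split_seq_limit[of 1]) blast
  have agree: "agree_upto (int j - 1) (\<beta> + \<gamma>) a" for j
  proof -
    let ?z = "split_seq a (2 * j)" and ?w = "split_seq a (Suc (2 * j))"
    have "agree_upto (int j - 1) (\<beta> + \<gamma>) (?z + ?w)"
      using agree_upto_add[OF \<beta> \<gamma>] by simp
    moreover have "agree_upto (int j - 1) ?z (convergent ?z j)"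
      by (rule agree_upto_mono[OF agree_upto_convergent[OF infinite_cf_split_seq]])
        (use split_seq_precision_ge[of "2 * j"] in simp)
    then have "agree_upto (int j - 1) (?z + ?w) (convergent ?z j + ?w)"
      by (rule agree_upto_add) simp
    ultimately have "agree_upto (int j - 1) (\<beta> + \<gamma>) (convergent ?z j + ?w)"
      by (rule agree_upto_trans)
    then show ?thesis
      by (simp add: split_seq.simps)
  qed
  have "\<beta> \<in> Gset" "\<gamma> \<in> Gset"
    using pqdeg_ge_if_agree_upto_split_seq[of 0 \<beta>] pqdeg_ge_if_agree_upto_split_seq[of 1 \<gamma>] \<beta> \<gamma>
    by (simp_all add: in_Gset_if_pqdeg_ge)
  moreover have "a = \<beta> + \<gamma>"
    by (rule eq_if_agree_upto_all[OF agree_upto_sym[OF agree]])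
  ultimately show ?thesis
    by (rule that)
qed

end

theorem theorem1p3:
  "{\<alpha> + \<beta> | \<alpha> \<beta>. \<alpha> \<in> (Gset :: 'a::field fls set) \<and> \<beta> \<in> Gset} = UNIV"
proof (intro set_eqI iffI)
  fix x :: "'a fls"
  show "x \<in> {\<alpha> + \<beta> | \<alpha> \<beta>. \<alpha> \<in> Gset \<and> \<beta> \<in> Gset}"
  proof (cases "x \<in> ratfuns")
    case True
    then have "x \<in> Gset" "(0 :: 'a fls) \<in> Gset"
      unfolding Gset_def using zero_in_ratfuns by auto
    then show ?thesis by force
  next
    case False
    then obtain \<beta> \<gamma> where "\<beta> \<in> Gset" "\<gamma> \<in> Gset" "x = \<beta> + \<gamma>"
      by (rule Gset_decomposition)
    then show ?thesis
      by blast
  qed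
qed simp

end
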